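(* Let $(X,\|\cdot\|)$ be a strictly convex two-dimensional real normed space with closed unit ball $B_X$ and unit sphere $S_X$. Fix a basis $\{e_1,e_2\}$ of $X$ and write $(s,t)=se_1+te_2$. Let $\alpha>0$ be such that $(\alpha,1),(\alpha,-1)\in S_X$, and let $\delta>0$ be such that $(0,\delta)\in S_X$. Then $$B_X\cap\bigl(]\alpha,\infty[\times\mathbb R\bigr)\subset(\alpha,0)+\delta^{-1}\operatorname{int}(B_X)$$ and $$\bigl((\alpha,0)+\delta^{-1}B_X\bigr)\cap\bigl(]-\infty,\alpha[\times\mathbb R\bigr)\subset\operatorname{int}(B_X),$$ where $I\times\mathbb R$ denotes $\{(s,t):s\in I,\ t\in\mathbb R\}$.
   Context: A norm is strictly convex if the unit sphere contains no nondegenerate line segment. $\operatorname{int}$ denotes the interior, $]a,b[$ an open interval. *)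

theory Defs
  imports "HOL-Analysis.Analysis"
begin

definition strictly_convex_norm :: "'a::real_normed_vector itself \<Rightarrow> bool" where
  "strictly_convex_norm _ \<longleftrightarrow>
     (\<forall>x y::'a. x \<noteq> y \<longrightarrow> \<not> (closed_segment x y \<subseteq> sphere 0 1))"

definition coord :: "'a::real_normed_vector \<Rightarrow> 'a \<Rightarrow> real \<Rightarrow> real \<Rightarrow> 'a" where
  "coord e1 e2 s t = s *\<^sub>R e1 + t *\<^sub>R e2"

definition strip :: "'a::real_normed_vector \<Rightarrow> 'a \<Rightarrow> real set \<Rightarrow> 'a set" where
  "strip e1 e2 I = {coord e1 e2 s t | s t. s \<in> I}"

end

theory Submission
  imports Defs
begin

text \<open>By strict convexity, every point of an open segment joining two points of \<open>B_X\<close> lies in the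
  open unit ball; on the line \<open>s = \<alpha>\<close> the open unit ball is \<open>{(\<alpha>,\<tau>) : |\<tau>| < 1}\<close> and on the
  line \<open>s = 0\<close> it is \<open>{(0,\<tau>) : |\<tau>| < \<delta>}\<close>.

  For \<open>(s,t) \<in> B_X\<close> with \<open>s > \<alpha>\<close>, the chords from \<open>(s,t)\<close> to \<open>(0,\<plusminus>\<delta>)\<close> cross \<open>s = \<alpha>\<close> inside
  the ball, which gives \<open>\<delta>(s - \<alpha>) + \<alpha>|t| < s\<close>; then
  \<open>\<delta>((s,t) - (\<alpha>,0)) = \<delta>(s-\<alpha>)/s \<cdot> (s,t) + \<alpha>t/s \<cdot> (0,\<delta>)\<close> has norm \<open>< 1\<close>.

  For \<open>s < \<alpha>\<close> and \<open>z = \<delta>((s,t) - (\<alpha>,0)) \<in> B_X\<close>, the chords from \<open>z\<close> to \<open>(\<alpha>,\<plusminus>1)\<close> cross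
  \<open>s = 0\<close> inside the ball; this bounds the second coordinate of \<open>z\<close> so that
  \<open>\<delta>(s,t) = \<theta> z + (\<delta> - \<theta>)(\<alpha>,\<rho>)\<close> with \<open>0 < \<theta> < \<delta>\<close> and \<open>|\<rho>| < 1\<close>, whence \<open>\<parallel>(s,t)\<parallel> < 1\<close>.\<close>

lemma convex_on_interior_max_imp_eq:
  fixes f :: "real \<Rightarrow> real"
  assumes f: "convex_on {a..b} f" and max: "\<And>y. y \<in> {a..b} \<Longrightarrow> f y \<le> f c"
    and c: "a < c" "c < b" and x: "x \<in> {a..b}"
  shows "f x = f c"
proof (rule ccontr)
  assume "f x \<noteq> f c"
  with max x have less: "f x < f c" by fastforce
  show False
  proof (cases "x < c")
    case True
    define l where "l = (c - x) / (b - x)"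
    have l: "0 < l" "l < 1" using True c unfolding l_def by (auto simp: field_simps)
    have "b - x \<noteq> 0" using True c by simp
    then have "c = (1 - l) *\<^sub>R x + l *\<^sub>R b"
      unfolding l_def by (simp add: divide_simps) (simp add: algebra_simps)
    then have "f c \<le> (1 - l) * f x + l * f b"
      using convex_onD[OF f, of l x b] l x c by auto
    also have "\<dots> < (1 - l) * f c + l * f c"
      using l less max[of b] c by (intro add_less_le_mono mult_left_mono) auto
    finally show False by (simp add: algebra_simps)
  next
    case False
    with less have "c < x" by (cases "x = c") auto
    define l where "l = (c - a) / (x - a)"
    have l: "0 < l" "l < 1" using \<open>c < x\<close> c unfolding l_def by (auto simp: field_simps)
    have "x - a \<noteq> 0" using \<open>c < x\<close> c by simp
    then have "c = (1 - l) *\<^sub>R a + l *\<^sub>R x"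
      unfolding l_def by (simp add: divide_simps) (simp add: algebra_simps)
    then have "f c \<le> (1 - l) * f a + l * f x"
      using convex_onD[OF f, of l a x] l x c by auto
    also have "\<dots> < (1 - l) * f c + l * f c"
      using l less max[of a] c by (intro add_le_less_mono mult_left_mono mult_strict_left_mono) auto
    finally show False by (simp add: algebra_simps)
  qed
qed

lemma norm_scaleR_add_le:
  fixes x y :: "'a::real_normed_vector"
  shows "norm (a *\<^sub>R x + b *\<^sub>R y) \<le> \<bar>a\<bar> * norm x + \<bar>b\<bar> * norm y"
  by (metis norm_scaleR norm_triangle_ineq)

lemma convex_on_norm_segment:
  fixes x y :: "'a::real_normed_vector"
  assumes "convex S"
  shows "convex_on S (\<lambda>\<mu>. norm ((1 - \<mu>) *\<^sub>R x + \<mu> *\<^sub>R y))"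
proof (rule convex_onI[OF _ assms])
  fix t u v :: real assume "0 < t" "t < 1"
  moreover have "(1 - ((1 - t) *\<^sub>R u + t *\<^sub>R v)) *\<^sub>R x + ((1 - t) *\<^sub>R u + t *\<^sub>R v) *\<^sub>R y
      = (1 - t) *\<^sub>R ((1 - u) *\<^sub>R x + u *\<^sub>R y) + t *\<^sub>R ((1 - v) *\<^sub>R x + v *\<^sub>R y)"
    by (simp add: algebra_simps)
  ultimately show "norm ((1 - ((1 - t) *\<^sub>R u + t *\<^sub>R v)) *\<^sub>R x + ((1 - t) *\<^sub>R u + t *\<^sub>R v) *\<^sub>R y)
      \<le> (1 - t) * norm ((1 - u) *\<^sub>R x + u *\<^sub>R y) + t * norm ((1 - v) *\<^sub>R x + v *\<^sub>R y)"
    using norm_scaleR_add_le[of "1 - t" _ t] by simp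
qed

lemma strictly_convex_norm_open_segment:
  fixes x y :: "'a::real_normed_vector"
  assumes sc: "strictly_convex_norm TYPE('a)" and "norm x \<le> 1" "norm y \<le> 1"
    and z: "z \<in> open_segment x y"
  shows "norm z < 1"
proof -
  define f where "f \<mu> = norm ((1 - \<mu>) *\<^sub>R x + \<mu> *\<^sub>R y)" for \<mu>
  have convex: "convex_on {0..1} f"
    unfolding f_def by (rule convex_on_norm_segment) simp
  have le: "f \<mu> \<le> 1" if "\<mu> \<in> {0..1}" for \<mu>
    using convex_on_le_max[OF convex that] assms unfolding f_def by simp
  obtain \<theta> where \<theta>: "0 < \<theta>" "\<theta> < 1" "z = (1 - \<theta>) *\<^sub>R x + \<theta> *\<^sub>R y" and "x \<noteq> y"
    using z by (auto simp: in_segment)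
  show ?thesis
  proof (rule ccontr)
    assume "\<not> norm z < 1"
    with le[of \<theta>] \<theta> have "f \<theta> = 1" by (simp add: f_def)
    then have "f \<mu> = 1" if "\<mu> \<in> {0..1}" for \<mu>
      using convex_on_interior_max_imp_eq[OF convex _ _ _ that, of \<theta>] le \<theta> by simp
    then have "closed_segment x y \<subseteq> sphere 0 1"
      by (auto simp: in_segment f_def)
    with sc \<open>x \<noteq> y\<close> show False unfolding strictly_convex_norm_def by blast
  qed
qed

lemma coord_add: "coord e1 e2 s t + coord e1 e2 s' t' = coord e1 e2 (s + s') (t + t')"
  by (simp add: coord_def algebra_simps)

lemma coord_diff: "coord e1 e2 s t - coord e1 e2 s' t' = coord e1 e2 (s - s') (t - t')"
  by (simp add: coord_def algebra_simps)

lemma scaleR_coord: "c *\<^sub>R coord e1 e2 s t = coord e1 e2 (c * s) (c * t)"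
  by (simp add: coord_def scaleR_add_right)

lemma coord_eq_iff:
  assumes "independent {e1, e2}" "e1 \<noteq> e2"
  shows "coord e1 e2 s t = coord e1 e2 s' t' \<longleftrightarrow> s = s' \<and> t = t'"
proof
  assume "coord e1 e2 s t = coord e1 e2 s' t'"
  then have eq: "(s - s') *\<^sub>R e1 = (t' - t) *\<^sub>R e2"
    by (simp add: coord_def algebra_simps)
  have "e1 \<notin> span {e2}" "e2 \<noteq> 0"
    using assms by (auto simp: independent_insert)
  moreover have "s = s'"
  proof (rule ccontr)
    assume "s \<noteq> s'"
    with eq have "e1 = ((t' - t) / (s - s')) *\<^sub>R e2"
      by (metis divide_inverse_commute eq_vector_fraction_iff right_minus_eq)
    then have "e1 \<in> span {e2}" by (simp add: span_base span_scale)
    with \<open>e1 \<notin> span {e2}\<close> show False ..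
  qed
  ultimately show "s = s' \<and> t = t'" using eq by simp
qed simp

locale strictly_convex_plane =
  fixes e1 e2 :: "'a::real_normed_vector" and \<alpha> \<delta> :: real
  assumes strictly_convex: "strictly_convex_norm TYPE('a)"
    and independent: "independent {e1, e2}" and distinct: "e1 \<noteq> e2"
    and alpha_pos: "\<alpha> > 0"
    and norm_upper: "norm (coord e1 e2 \<alpha> 1) = 1"
    and norm_lower: "norm (coord e1 e2 \<alpha> (-1)) = 1"
    and delta_pos: "\<delta> > 0"
    and norm_axis: "norm (coord e1 e2 0 \<delta>) = 1"
begin

abbreviation pt :: "real \<Rightarrow> real \<Rightarrow> 'a" where
  "pt \<equiv> coord e1 e2"

lemma pt_eq_iff: "pt s t = pt s' t' \<longleftrightarrow> s = s' \<and> t = t'"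
  using coord_eq_iff[OF independent distinct] .

lemma norm_pt_zero: "norm (pt 0 \<tau>) = \<bar>\<tau>\<bar> / \<delta>"
proof -
  have "pt 0 \<tau> = (\<tau> / \<delta>) *\<^sub>R pt 0 \<delta>"
    using delta_pos by (simp add: coord_def)
  then show ?thesis
    using norm_axis delta_pos by simp
qed

lemma norm_pt_chord_crossing:
  assumes "norm (pt s t) \<le> 1" "norm (pt s' t') \<le> 1" "s < \<sigma>" "\<sigma> < s'"
  shows "norm (pt \<sigma> (t + (\<sigma> - s) / (s' - s) * (t' - t))) < 1"
proof -
  define \<theta> where "\<theta> = (\<sigma> - s) / (s' - s)"
  have \<theta>: "0 < \<theta>" "\<theta> < 1"
    using assms(3,4) unfolding \<theta>_def by (auto simp: field_simps)
  have "(1 - \<theta>) * s + \<theta> * s' = \<sigma>"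
    using assms(3,4) unfolding \<theta>_def by (simp add: divide_simps) (simp add: algebra_simps)
  then have "pt \<sigma> (t + \<theta> * (t' - t)) = (1 - \<theta>) *\<^sub>R pt s t + \<theta> *\<^sub>R pt s' t'"
    unfolding scaleR_coord coord_add pt_eq_iff by (simp add: algebra_simps)
  moreover have "pt s t \<noteq> pt s' t'"
    using assms(3,4) by (simp add: pt_eq_iff)
  ultimately have "pt \<sigma> (t + \<theta> * (t' - t)) \<in> open_segment (pt s t) (pt s' t')"
    using \<theta> by (auto simp: in_segment)
  then show ?thesis
    using strictly_convex_norm_open_segment[OF strictly_convex assms(1,2)] by (simp add: \<theta>_def)
qed

lemma pt_in_open_segment_vertical:
  assumes "\<tau>1 < \<tau>" "\<tau> < \<tau>2"
  shows "pt \<sigma> \<tau> \<in> open_segment (pt \<sigma> \<tau>1) (pt \<sigma> \<tau>2)"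
proof -
  define u where "u = (\<tau> - \<tau>1) / (\<tau>2 - \<tau>1)"
  have "0 < u" "u < 1"
    using assms unfolding u_def by (auto simp: field_simps)
  moreover have "(1 - u) * \<tau>1 + u * \<tau>2 = \<tau>"
    using assms unfolding u_def by (simp add: divide_simps) (simp add: algebra_simps)
  moreover have "pt \<sigma> \<tau> = (1 - u) *\<^sub>R pt \<sigma> \<tau>1 + u *\<^sub>R pt \<sigma> \<tau>2"
    using calculation unfolding scaleR_coord coord_add pt_eq_iff by (simp add: algebra_simps)
  ultimately show ?thesis
    using assms by (auto simp: in_segment pt_eq_iff)
qed

lemma norm_pt_alpha_lt_one_iff: "norm (pt \<alpha> \<tau>) < 1 \<longleftrightarrow> \<bar>\<tau>\<bar> < 1"
proof
  have strict: "norm z < 1" if "z \<in> open_segment x y" "norm x \<le> 1" "norm y \<le> 1" for x y z :: 'a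
    using strictly_convex_norm_open_segment[OF strictly_convex that(2,3,1)] .
  show "norm (pt \<alpha> \<tau>) < 1" if "\<bar>\<tau>\<bar> < 1"
    using strict[OF pt_in_open_segment_vertical[of "-1" \<tau> 1]] that norm_upper norm_lower by auto
  show "\<bar>\<tau>\<bar> < 1" if lt: "norm (pt \<alpha> \<tau>) < 1"
  proof (rule ccontr)
    assume "\<not> \<bar>\<tau>\<bar> < 1"
    then consider "\<tau> = 1" | "\<tau> = -1" | "1 < \<tau>" | "\<tau> < -1" by linarith
    then show False
    proof cases
      case 3
      with strict[OF pt_in_open_segment_vertical[of "-1" 1 \<tau> \<alpha>]] lt norm_upper norm_lower show False
        by auto
    next
      case 4
      with strict[OF pt_in_open_segment_vertical[of \<tau> "-1" 1 \<alpha>]] lt norm_upper norm_lower show False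
        by auto
    qed (use lt norm_upper norm_lower in auto)
  qed
qed

lemma norm_rescaled_lt_one_right_of_alpha:
  assumes x: "norm (pt s t) \<le> 1" and s: "\<alpha> < s"
  shows "norm (\<delta> *\<^sub>R (pt s t - pt \<alpha> 0)) < 1"
proof -
  have s_pos: "0 < s" using s alpha_pos by linarith
  have "\<bar>\<delta> + \<alpha> / s * (t - \<delta>)\<bar> < 1" "\<bar>- \<delta> + \<alpha> / s * (t + \<delta>)\<bar> < 1"
    using norm_pt_chord_crossing[of 0 \<delta> s t \<alpha>] norm_pt_chord_crossing[of 0 "- \<delta>" s t \<alpha>]
      x s alpha_pos norm_pt_zero delta_pos
    by (simp_all add: norm_pt_alpha_lt_one_iff)
  then have "\<delta> * (s - \<alpha>) + \<alpha> * t < s" "\<delta> * (s - \<alpha>) - \<alpha> * t < s"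
    using s_pos by (simp_all add: abs_less_iff field_simps)
  then have bound: "\<delta> * (s - \<alpha>) / s + \<bar>\<alpha> * t / s\<bar> < 1"
    using s_pos alpha_pos by (simp add: abs_if field_simps split: if_split_asm)
  have "\<delta> *\<^sub>R (pt s t - pt \<alpha> 0) = (\<delta> * (s - \<alpha>) / s) *\<^sub>R pt s t + (\<alpha> * t / s) *\<^sub>R pt 0 \<delta>"
    using s_pos unfolding coord_diff scaleR_coord coord_add pt_eq_iff by (simp add: field_simps)
  also have "norm \<dots> \<le> \<bar>\<delta> * (s - \<alpha>) / s\<bar> * norm (pt s t) + \<bar>\<alpha> * t / s\<bar> * norm (pt 0 \<delta>)"
    by (rule norm_scaleR_add_le)
  also have "\<dots> \<le> \<delta> * (s - \<alpha>) / s + \<bar>\<alpha> * t / s\<bar>"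
    using mult_left_le[OF x, of "\<delta> * (s - \<alpha>) / s"] s s_pos delta_pos norm_axis by simp
  finally show ?thesis using bound by linarith
qed

lemma norm_lt_one_left_of_alpha:
  assumes z: "norm (\<delta> *\<^sub>R (pt s t - pt \<alpha> 0)) \<le> 1" and s: "s < \<alpha>"
  shows "norm (pt s t) < 1"
proof -
  define a b where "a = \<delta> * (s - \<alpha>)" and "b = \<delta> * t"
  have z_eq: "\<delta> *\<^sub>R (pt s t - pt \<alpha> 0) = pt a b"
    unfolding coord_diff scaleR_coord a_def b_def by simp
  have a_neg: "a < 0" using s delta_pos unfolding a_def by (simp add: mult_pos_neg)
  define \<theta> where "\<theta> = - a / (\<alpha> - a)"
  have \<theta>: "0 < \<theta>" "\<theta> < 1" using a_neg alpha_pos unfolding \<theta>_def by (auto simp: field_simps)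
  have "\<bar>b + \<theta> * (1 - b)\<bar> < \<delta>" "\<bar>b + \<theta> * (- 1 - b)\<bar> < \<delta>"
    using norm_pt_chord_crossing[of a b \<alpha> 1 0] norm_pt_chord_crossing[of a b \<alpha> "- 1" 0]
      z z_eq a_neg alpha_pos norm_upper norm_lower delta_pos
    by (simp_all add: norm_pt_zero \<theta>_def)
  then have bound: "\<bar>(1 - \<theta>) * b\<bar> < \<delta> - \<theta>"
    unfolding abs_less_iff by (simp add: algebra_simps)
  define \<rho> where "\<rho> = (1 - \<theta>) * b / (\<delta> - \<theta>)"
  have \<rho>: "\<bar>\<rho>\<bar> < 1" and \<delta>\<theta>: "0 < \<delta> - \<theta>"
    using bound unfolding \<rho>_def by (auto simp: abs_divide)
  have "\<theta> * (a - \<alpha>) = a"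
    using a_neg alpha_pos unfolding \<theta>_def by (simp add: field_simps)
  then have "\<delta> *\<^sub>R pt s t = \<theta> *\<^sub>R pt a b + (\<delta> - \<theta>) *\<^sub>R pt \<alpha> \<rho>"
    using \<delta>\<theta> unfolding scaleR_coord coord_add pt_eq_iff a_def b_def \<rho>_def
    by (simp add: field_simps)
  then have "\<delta> * norm (pt s t) = norm (\<theta> *\<^sub>R pt a b + (\<delta> - \<theta>) *\<^sub>R pt \<alpha> \<rho>)"
    using delta_pos by (metis abs_of_pos norm_scaleR)
  also have "\<dots> \<le> \<theta> * norm (pt a b) + (\<delta> - \<theta>) * norm (pt \<alpha> \<rho>)"
    using norm_scaleR_add_le[of \<theta> "pt a b" "\<delta> - \<theta>" "pt \<alpha> \<rho>"] \<theta> \<delta>\<theta> by simp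
  also have "\<dots> < \<theta> * 1 + (\<delta> - \<theta>) * 1"
    using z z_eq \<theta> \<delta>\<theta> \<rho> norm_pt_alpha_lt_one_iff
    by (intro add_le_less_mono mult_left_mono mult_strict_left_mono) auto
  finally show ?thesis using delta_pos by simp
qed

end

theorem proposition2p6:
  fixes e1 e2 :: "'a::real_normed_vector" and \<alpha> \<delta> :: real
  assumes sc: "strictly_convex_norm TYPE('a)"
    and basis: "e1 \<noteq> e2" "independent {e1, e2}" "span {e1, e2} = UNIV"
    and alpha: "\<alpha> > 0" "coord e1 e2 \<alpha> 1 \<in> sphere 0 1" "coord e1 e2 \<alpha> (-1) \<in> sphere 0 1"
    and delta: "\<delta> > 0" "coord e1 e2 0 \<delta> \<in> sphere 0 1"
  shows "(cball 0 1 \<inter> strip e1 e2 {\<alpha><..}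
           \<subseteq> (\<lambda>y. coord e1 e2 \<alpha> 0 + y) ` ((\<lambda>y. inverse \<delta> *\<^sub>R y) ` interior (cball 0 1))) \<and>
         (((\<lambda>y. coord e1 e2 \<alpha> 0 + y) ` ((\<lambda>y. inverse \<delta> *\<^sub>R y) ` cball 0 1)) \<inter> strip e1 e2 {..<\<alpha>}
           \<subseteq> interior (cball 0 1))"
proof -
  interpret strictly_convex_plane e1 e2 \<alpha> \<delta>
    using assms by unfold_locales auto
  have ball_subset_interior: "ball 0 1 \<subseteq> interior (cball (0::'a) 1)"
    by (simp add: interior_maximal)
  have shift_scale: "x \<in> (\<lambda>y. pt \<alpha> 0 + y) ` (\<lambda>y. inverse \<delta> *\<^sub>R y) ` S
      \<longleftrightarrow> \<delta> *\<^sub>R (x - pt \<alpha> 0) \<in> S" for x S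
    using delta_pos by force
  show ?thesis
  proof (intro conjI subsetI)
    fix x assume "x \<in> cball 0 1 \<inter> strip e1 e2 {\<alpha><..}"
    then obtain s t where "x = pt s t" "norm (pt s t) \<le> 1" "\<alpha> < s"
      by (auto simp: strip_def)
    with norm_rescaled_lt_one_right_of_alpha ball_subset_interior
    show "x \<in> (\<lambda>y. pt \<alpha> 0 + y) ` (\<lambda>y. inverse \<delta> *\<^sub>R y) ` interior (cball 0 1)"
      by (auto simp: shift_scale)
  next
    fix x assume "x \<in> (\<lambda>y. pt \<alpha> 0 + y) ` (\<lambda>y. inverse \<delta> *\<^sub>R y) ` cball 0 1 \<inter> strip e1 e2 {..<\<alpha>}"
    then obtain s t where "x = pt s t" "norm (\<delta> *\<^sub>R (pt s t - pt \<alpha> 0)) \<le> 1" "s < \<alpha>"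
      by (auto simp: strip_def shift_scale)
    with norm_lt_one_left_of_alpha ball_subset_interior
    show "x \<in> interior (cball 0 1)"
      by auto
  qed
qed

end
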